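(* Let $G$ be a finite simple graph with $n\ge4$ vertices such that every induced subgraph of $G$ on four vertices contains $K_{1,3}$ as a (not necessarily induced) subgraph. Then $G$ contains $K_{n-3}+\epsilon_3$ as a subgraph.
   Context: $K_{1,3}$ is the star with one center and three leaves; $\epsilon_3$ is the graph with three vertices and no edges; $K_{n-3}+\epsilon_3$ is obtained from disjoint copies of the complete graph $K_{n-3}$ and $\epsilon_3$ by adding all edges between them. *)

theory Defs
  imports Main
begin

definition simple_graph :: "'a set \<Rightarrow> ('a \<Rightarrow> 'a \<Rightarrow> bool) \<Rightarrow> bool" where
  "simple_graph V E \<longleftrightarrow> finite V \<and> (\<forall>x y. E x y \<longrightarrow> x \<in> V \<and> y \<in> V)
     \<and> (\<forall>x. \<not> E x x) \<and> (\<forall>x y. E x y \<longrightarrow> E y x)"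

definition contains_subgraph ::
  "'a set \<Rightarrow> ('a \<Rightarrow> 'a \<Rightarrow> bool) \<Rightarrow> 'b set \<Rightarrow> ('b \<Rightarrow> 'b \<Rightarrow> bool) \<Rightarrow> bool" where
  "contains_subgraph V E V' E' \<longleftrightarrow>
     (\<exists>f. inj_on f V' \<and> f ` V' \<subseteq> V \<and> (\<forall>x\<in>V'. \<forall>y\<in>V'. E' x y \<longrightarrow> E (f x) (f y)))"

definition induced :: "('a \<Rightarrow> 'a \<Rightarrow> bool) \<Rightarrow> 'a set \<Rightarrow> 'a \<Rightarrow> 'a \<Rightarrow> bool" where
  "induced E S x y \<longleftrightarrow> x \<in> S \<and> y \<in> S \<and> E x y"

definition K13_verts :: "nat set" where "K13_verts = {0, 1, 2, 3}"
definition K13_adj :: "nat \<Rightarrow> nat \<Rightarrow> bool" where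
  "K13_adj x y \<longleftrightarrow> x \<in> K13_verts \<and> y \<in> K13_verts \<and> x \<noteq> y \<and> (x = 0 \<or> y = 0)"

text \<open>K_{n-3} + eps_3 on vertex set {0..<n}: vertices 0,1,2 form the
independent set eps_3, vertices 3..n-1 form K_{n-3}, and all edges between
the two parts are present.\<close>

definition join_verts :: "nat \<Rightarrow> nat set" where "join_verts n = {0..<n}"
definition join_adj :: "nat \<Rightarrow> nat \<Rightarrow> nat \<Rightarrow> bool" where
  "join_adj n x y \<longleftrightarrow> x < n \<and> y < n \<and> x \<noteq> y \<and> \<not> (x < 3 \<and> y < 3)"

end

theory Submission
  imports Defs
begin

text \<open>In a graph on four vertices a \<open>K\<^sub>1\<^sub>,\<^sub>3\<close> is a vertex adjacent to the
other three. So the hypothesis says that among any four vertices one sees the other three;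
consequently no two non-edges of \<open>G\<close> are disjoint and no vertex misses three others.
A graph (here the complement of \<open>G\<close>) with these two properties has all its edges inside
a set of at most three vertices, and enlarging that set to exactly three vertices \<open>T\<close>,
every pair of distinct vertices not both in \<open>T\<close> is an edge of \<open>G\<close>: that is a copy of
\<open>K\<^sub>n\<^sub>-\<^sub>3 + \<epsilon>\<^sub>3\<close> with \<open>T\<close> as the independent part.\<close>

lemma claw_centre:
  assumes "contains_subgraph S (induced E S) K13_verts K13_adj" and "card S = 4"
  shows "\<exists>v\<in>S. \<forall>w\<in>S. w \<noteq> v \<longrightarrow> E v w"
proof -
  obtain f where f: "inj_on f K13_verts" "f ` K13_verts \<subseteq> S"
    and edges: "\<forall>x\<in>K13_verts. \<forall>y\<in>K13_verts. K13_adj x y \<longrightarrow> induced E S (f x) (f y)"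
    using assms(1) unfolding contains_subgraph_def by blast
  have "card (f ` K13_verts) = 4"
    using card_image[OF f(1)] by (simp add: K13_verts_def)
  then have onto: "f ` K13_verts = S"
    using f(2) assms(2) by (metis card.infinite card_subset_eq zero_neq_numeral)
  have centre: "0 \<in> K13_verts" by (simp add: K13_verts_def)
  have "E (f 0) w" if "w \<in> S" "w \<noteq> f 0" for w
  proof -
    obtain i where i: "i \<in> K13_verts" "w = f i" using onto \<open>w \<in> S\<close> by blast
    then have "i \<noteq> 0" using \<open>w \<noteq> f 0\<close> by metis
    then have "K13_adj 0 i" using i(1) centre by (simp add: K13_adj_def)
    then show ?thesis using edges i centre by (auto simp: induced_def)
  qed
  moreover have "f 0 \<in> S" using onto centre by blast
  ultimately show ?thesis by blast
qed

lemma four_vertices_dominating: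
  assumes
      "\<forall>S. S \<subseteq> V \<and> card S = 4 \<longrightarrow> contains_subgraph S (induced E S) K13_verts K13_adj"
    and "{a, b, c, d} \<subseteq> V" and "distinct [a, b, c, d]"
  shows "\<exists>v\<in>{a, b, c, d}. \<forall>w\<in>{a, b, c, d}. w \<noteq> v \<longrightarrow> E v w"
proof -
  have "card {a, b, c, d} = 4" using assms(3) by simp
  then show ?thesis using claw_centre assms(1,2) by blast
qed

text \<open>A graph with no two disjoint edges and maximum degree at most two is a triangle or
a path of length at most two, plus isolated vertices.\<close>

lemma relation_covered_by_three:
  assumes irrefl: "\<And>x. \<not> N x x" and sym: "\<And>x y. N x y \<Longrightarrow> N y x"
    and no_disjoint_pairs: "\<And>a b c d. N a b \<Longrightarrow> N c d \<Longrightarrow> distinct [a, b, c, d] \<Longrightarrow> False"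
    and no_three_neighbours:
      "\<And>a b c d. N a b \<Longrightarrow> N a c \<Longrightarrow> N a d \<Longrightarrow> distinct [a, b, c, d] \<Longrightarrow> False"
  shows "\<exists>C. finite C \<and> card C \<le> 3 \<and> C \<subseteq> {x. \<exists>y. N x y} \<and> (\<forall>x y. N x y \<longrightarrow> x \<in> C)"
proof (cases "\<exists>a b. N a b")
  case False
  then show ?thesis by auto
next
  case True
  then obtain a b where ab: "N a b" by blast
  have "a \<noteq> b" using ab irrefl by blast
  show ?thesis
  proof (cases "\<exists>c. c \<notin> {a, b} \<and> (N a c \<or> N b c)")
    case True
    then obtain c where c: "c \<notin> {a, b}" "N a c \<or> N b c" by blast
    have "x \<in> {a, b, c}" if xy: "N x y" for x y
    proof (rule ccontr)
      assume x: "x \<notin> {a, b, c}"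
      have "x \<noteq> y" using xy irrefl by blast
      consider "y \<notin> {a, b, c}" | "y = a" | "y = b" | "y = c" by blast
      then show False
      proof cases
        case 1
        then show False using no_disjoint_pairs[OF xy ab] x \<open>a \<noteq> b\<close> \<open>x \<noteq> y\<close> by auto
      next
        case 2
        then have "N a x" "N x a" using xy sym[OF xy] by simp_all
        from c(2) show False
        proof
          assume "N a c"
          then show False using no_three_neighbours[OF ab \<open>N a c\<close> \<open>N a x\<close>] x c(1) \<open>a \<noteq> b\<close> by auto
        next
          assume "N b c"
          then show False using no_disjoint_pairs[OF \<open>N x a\<close> \<open>N b c\<close>] x c(1) \<open>a \<noteq> b\<close> by auto
        qed
      next
        case 3
        then have "N b x" "N x b" using xy sym[OF xy] by simp_all
        from c(2) show False
        proof
          assume "N a c"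
          then show False using no_disjoint_pairs[OF \<open>N x b\<close> \<open>N a c\<close>] x c(1) \<open>a \<noteq> b\<close> by auto
        next
          assume "N b c"
          then show False
            using no_three_neighbours[OF sym[OF ab] \<open>N b c\<close> \<open>N b x\<close>] x c(1) \<open>a \<noteq> b\<close> by auto
        qed
      next
        case 4
        then show False using no_disjoint_pairs[OF xy ab] x c(1) \<open>a \<noteq> b\<close> by auto
      qed
    qed
    moreover have "{a, b, c} \<subseteq> {x. \<exists>y. N x y}" using ab c sym by blast
    ultimately show ?thesis by (intro exI[of _ "{a, b, c}"]) (auto simp: card_insert_le_m1)
  next
    case False
    have "x \<in> {a, b}" if xy: "N x y" for x y
    proof (rule ccontr)
      assume x: "x \<notin> {a, b}"
      then have "y \<in> {a, b}" using no_disjoint_pairs[OF xy ab] xy irrefl \<open>a \<noteq> b\<close> by auto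
      then show False using False x sym[OF xy] by auto
    qed
    moreover have "{a, b} \<subseteq> {x. \<exists>y. N x y}" using ab sym by blast
    ultimately show ?thesis by (intro exI[of _ "{a, b}"]) (auto simp: card_insert_le_m1)
  qed
qed

lemma nonedges_covered_by_three:
  assumes "simple_graph V E"
    and "\<forall>S. S \<subseteq> V \<and> card S = 4 \<longrightarrow> contains_subgraph S (induced E S) K13_verts K13_adj"
  obtains C where "C \<subseteq> V" "card C \<le> 3"
    "\<forall>x\<in>V. \<forall>y\<in>V. x \<noteq> y \<and> \<not> E x y \<longrightarrow> x \<in> C \<and> y \<in> C"
proof -
  have E_sym: "\<And>x y. E x y \<Longrightarrow> E y x" using assms(1) by (simp add: simple_graph_def)
  define N where "N x y \<longleftrightarrow> x \<in> V \<and> y \<in> V \<and> x \<noteq> y \<and> \<not> E x y" for x y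
  have N_irrefl: "\<not> N x x" for x by (simp add: N_def)
  have N_sym: "N y x" if "N x y" for x y using that E_sym[of y x] by (auto simp: N_def)
  have no_disjoint_pairs: False if "N a b" "N c d" "distinct [a, b, c, d]" for a b c d
  proof -
    have "{a, b, c, d} \<subseteq> V" using that(1,2) by (auto simp: N_def)
    then have "E a b \<or> E b a \<or> E c d \<or> E d c"
      using four_vertices_dominating[OF assms(2) _ that(3)] that(3) by auto
    then show False using that(1,2) E_sym[of b a] E_sym[of d c] by (auto simp: N_def)
  qed
  have no_three_neighbours: False if "N a b" "N a c" "N a d" "distinct [a, b, c, d]" for a b c d
  proof -
    have "{a, b, c, d} \<subseteq> V" using that(1-3) by (auto simp: N_def)
    then have "E a b \<or> E b a \<or> E c a \<or> E d a"
      using four_vertices_dominating[OF assms(2) _ that(4)] that(4) by auto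
    then show False using that(1-3) E_sym[of b a] E_sym[of c a] E_sym[of d a] by (auto simp: N_def)
  qed
  have "\<exists>C. finite C \<and> card C \<le> 3 \<and> C \<subseteq> {x. \<exists>y. N x y} \<and> (\<forall>x y. N x y \<longrightarrow> x \<in> C)"
    by (rule relation_covered_by_three) (fact N_irrefl N_sym no_disjoint_pairs no_three_neighbours)+
  then obtain C where C: "C \<subseteq> {x. \<exists>y. N x y}" "card C \<le> 3" "\<forall>x y. N x y \<longrightarrow> x \<in> C"
    by blast
  show ?thesis
  proof (rule that)
    show "C \<subseteq> V" using C(1) by (auto simp: N_def)
    show "card C \<le> 3" by (fact C(2))
    show "\<forall>x\<in>V. \<forall>y\<in>V. x \<noteq> y \<and> \<not> E x y \<longrightarrow> x \<in> C \<and> y \<in> C"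
    proof (intro ballI impI)
      fix x y assume "x \<in> V" "y \<in> V" "x \<noteq> y \<and> \<not> E x y"
      then have "N x y" by (simp add: N_def)
      then show "x \<in> C \<and> y \<in> C" using C(3) N_sym by blast
    qed
  qed
qed

lemma enumeration_with_prefix:
  assumes "finite V" "T \<subseteq> V" "card T = k" "card V = n"
  obtains f where "bij_betw f {0..<n} V" "\<And>x. x < n \<Longrightarrow> f x \<in> T \<longleftrightarrow> x < k"
proof -
  have "finite T" using assms(1,2) finite_subset by blast
  obtain g where g: "bij_betw g {0..<k} T"
    using ex_bij_betw_nat_finite[OF \<open>finite T\<close>] assms(3) by blast
  obtain h where h: "bij_betw h {0..<n - k} (V - T)"
    using ex_bij_betw_nat_finite[of "V - T"] assms card_Diff_subset[OF \<open>finite T\<close> assms(2)]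
    by auto
  have "k \<le> n" using assms card_mono by blast
  have "bij_betw (\<lambda>x. x - k) {k..<n} {0..<n - k}"
    by (auto simp: bij_betw_def inj_on_def image_minus_const_atLeastLessThan_nat)
  then have "bij_betw (\<lambda>x. h (x - k)) {k..<n} (V - T)"
    using bij_betw_trans[OF _ h] by (simp add: comp_def)
  then have "bij_betw (\<lambda>x. if x \<in> {0..<k} then g x else h (x - k))
      ({0..<k} \<union> {k..<n}) (T \<union> (V - T))"
    using g by (intro bij_betw_disjoint_Un) auto
  moreover have "{0..<k} \<union> {k..<n} = {0..<n}" "T \<union> (V - T) = V"
    using \<open>k \<le> n\<close> assms(2) by auto
  ultimately have f: "bij_betw (\<lambda>x. if x < k then g x else h (x - k)) {0..<n} V"
    by simp
  moreover have "(if x < k then g x else h (x - k)) \<in> T \<longleftrightarrow> x < k" if "x < n" for x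
    using bij_betwE[OF g] bij_betwE[OF h] that by auto
  ultimately show ?thesis using that by blast
qed

lemma contains_join_subgraph:
  assumes "finite V" "T \<subseteq> V" "card T = 3" "card V = n"
    and edges: "\<forall>x\<in>V. \<forall>y\<in>V. x \<noteq> y \<and> \<not> (x \<in> T \<and> y \<in> T) \<longrightarrow> E x y"
  shows "contains_subgraph V E (join_verts n) (join_adj n)"
proof -
  obtain f where f: "bij_betw f {0..<n} V" and in_T: "\<And>x. x < n \<Longrightarrow> f x \<in> T \<longleftrightarrow> x < 3"
    using enumeration_with_prefix[OF assms(1-4)] by blast
  have "E (f x) (f y)" if "join_adj n x y" for x y
  proof -
    have xy: "x < n" "y < n" "x \<noteq> y" "\<not> (x < 3 \<and> y < 3)"
      using that by (auto simp: join_adj_def)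
    then have "f x \<noteq> f y" using bij_betw_imp_inj_on[OF f] by (auto simp: inj_on_def)
    moreover have "f x \<in> V" "f y \<in> V" using xy bij_betwE[OF f] by auto
    moreover have "\<not> (f x \<in> T \<and> f y \<in> T)" using xy in_T by blast
    ultimately show ?thesis using edges by blast
  qed
  then show ?thesis
    using f unfolding contains_subgraph_def join_verts_def bij_betw_def by blast
qed

theorem mainTheorem15:
  fixes V :: "'a set" and E :: "'a \<Rightarrow> 'a \<Rightarrow> bool" and n :: nat
  assumes "simple_graph V E"
    and "card V = n" and "n \<ge> 4"
    and "\<forall>S. S \<subseteq> V \<and> card S = 4 \<longrightarrow> contains_subgraph S (induced E S) K13_verts K13_adj"
  shows "contains_subgraph V E (join_verts n) (join_adj n)"
proof -
  have "finite V" using assms(1) by (simp add: simple_graph_def)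
  obtain C where C: "C \<subseteq> V" "card C \<le> 3"
    and nonedges: "\<forall>x\<in>V. \<forall>y\<in>V. x \<noteq> y \<and> \<not> E x y \<longrightarrow> x \<in> C \<and> y \<in> C"
    using nonedges_covered_by_three[OF assms(1,4)] by blast
  obtain T where "C \<subseteq> T" "T \<subseteq> V" "card T = 3"
    using exists_subset_between[OF C(2) _ C(1) \<open>finite V\<close>] assms(2,3) by auto
  then show ?thesis
    using contains_join_subgraph[OF \<open>finite V\<close> _ _ assms(2)] nonedges by blast
qed

end
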